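(* Consider the multistage ANC game described in the context, with linear plant $x^{t+1}=A_tx^t+b^tB_tu^t$, and assume: (i) for every $t=0,\dots,T-1$ there exist scalars $e_t,d_t$ and functions $\alpha_t,\beta_t:\mathbb{R}_+\to\mathbb{R}$ with $\lim_{y\to+\infty}\alpha_t(y)=\lim_{y\to+\infty}\beta_t(y)=+\infty$, $\alpha_t(y)\ge e_t$, $\beta_t(y)\ge d_t$, such that $\sigma^t(x,u)\ge\alpha_t(\|u\|)+\beta_t(\|x\|)$ for all $x\in\mathbb{R}^n$, $u\in\mathbb{R}^m$; (ii) for all $t=0,\dots,T-1$, $\sigma^t:\mathbb{R}^n\times\mathbb{R}^m\to\mathbb{R}_+$ is convex in both its arguments (jointly); (iii) $\sigma^T:\mathbb{R}^n\to\mathbb{R}_+$ is convex and there exist a scalar $d_T$ and a function $\beta_T:\mathbb{R}_+\to\mathbb{R}_+$ with $\lim_{y\to+\infty}\beta_T(y)=+\infty$, $\beta_T(y)\ge d_T$, such that $\sigma^T(x)\ge\beta_T(\|x\|)$; (iv) $\sigma^T$ is continuous; for every $t=0,\dots,T-1$, $\sigma^t(\cdot,u)$ is continuous uniformly in $u\in\mathbb{R}^m$, and $\sigma^t(x,\cdot)$ is continuous for every $x\in\mathbb{R}^n$. Define $V_T(x,s)=\sigma^T(x)-g^T(s)$ and, recursively for $t=T-1,\dots,0$, \[ V_t(x,s)=\inf_{u\in\mathbb{R}^m}\sup_{p\in\mathcal{S}_{N-1}}p'\mathcal{V}_t(x,s,u), \] where $\mathcal{V}_t(x,s,u)\in\mathbb{R}^N$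 has components \[ [\mathcal{V}_t(x,s,u)]_a=\sigma^t(x,u)-g^t(a,s)+\sum_{i\in\mathcal{F}}P^t_{si}(a)\big[q^t_iV_{t+1}(A_tx+B_tu,i)+(1-q^t_i)V_{t+1}(A_tx,i)\big]. \] Then for all $t=0,\dots,T-1$, $x\in\mathbb{R}^n$, $s\in\mathcal{F}$, the value functions $V_t$ are well defined, in the sense that \[ \inf_{u\in\mathbb{R}^m}\sup_{p\in\mathcal{S}_{N-1}}p'\mathcal{V}_t(x,s,u)=\sup_{p\in\mathcal{S}_{N-1}}\inf_{u\in\mathbb{R}^m}p'\mathcal{V}_t(x,s,u) \] and this common value is finite, and $V_t(\cdot,s)$ is convex and continuous in $x$. Furthermore, the strategy pair defined by $(u^* )^t=\arg\inf_{u\in\mathbb{R}^m}\sup_{p\in\mathcal{S}_{N-1}}p'\mathcal{V}_t(x,s,u)$ and $(p^* )^t=\arg\sup_{p\in\mathcal{S}_{N-1}}\inf_{u\in\mathbb{R}^m}p'\mathcal{V}_t(x,s,u)$ is a saddle-point strategy of the multistage ANC game.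
   Context: Multistage ANC game on horizon $\{0,\dots,T\}$. Regimes $\mathcal{F}=\{1,\dots,|\mathcal{F}|\}$, jammer actions $\mathcal{A}=\{1,\dots,N\}$, $\mathcal{S}_{N-1}$ the unit simplex in $\mathbb{R}^N$. For each $t$ and $a\in\mathcal{A}$, $P^t(a)$ is an $|\mathcal{F}|\times|\mathcal{F}|$ row-stochastic matrix, and $q^t=(q^t_1,\dots,q^t_{|\mathcal{F}|})'\in[0,1]^{|\mathcal{F}|}$. $A_t,B_t$ are real matrices of sizes $n\times n$, $n\times m$. The state is $(x^t,s^t)\in\mathbb{R}^n\times\mathcal{F}$, with given initial $(x^0,s^0)$. At each $t\le T-1$ the controller, observing $(x^t,s^t)$, chooses $u^t\in\mathbb{R}^m$; the jammer, observing $(x^t,s^t)$ and $u^t$, chooses a probability vector $p^t\in\mathcal{S}_{N-1}$ and $a^t$ is drawn according to $p^t$; then $s^{t+1}$ is drawn with $\mathrm{Pr}(s^{t+1}=i\mid s^t=j,a^t=a)=P^t_{ji}(a)$, $b^t\in\{0,1\}$ is drawn with $\mathrm{Pr}(b^t=1\mid s^{t+1}=i)=q^t_i$ (conditionally independent of everything else given $s^{t+1}$), and $x^{t+1}=A_tx^t+b^tB_tu^t$. Stage costs $\sigma^t:\mathbb{R}^n\times\mathbb{R}^m\to\mathbb{R}_+$, terminal cost $\sigma^T:\mathbb{R}^n\to\mathbb{R}_+$, jammer costs $g^t:\mathcal{A}\times\mathcal{F}\to\mathbb{R}$ ($t<T$) and $g^T:\mathcal{F}\to\mathbb{R}$. The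 total payoff is $\Sigma=\sum_{t=0}^{T-1}\sigma^t(x^t,u^t)+\sigma^T(x^T)-\sum_{t=0}^{T-1}g^t(a^t,s^t)$; the controller minimizes and the jammer maximizes its expectation $\mathbb{E}^{u,p}[\Sigma]$ over strategy sequences $\{u^t\}$, $\{p^t\}$. A saddle-point strategy is a pair $(\{(u^* )^t\},\{(p^* )^t\})$ with $\mathbb{E}^{u^*,p^*}[\Sigma]=\inf_{\{u^t\}}\sup_{\{p^t\}}\mathbb{E}^{u,p}[\Sigma]=\sup_{\{p^t\}}\inf_{\{u^t\}}\mathbb{E}^{u,p}[\Sigma]$. *)

theory Defs
  imports "HOL-Analysis.Analysis"
begin

text \<open>Regimes: finite type 'f; jammer actions: finite type 'act;
  state space real^'n; controls real^'m.
  P t a j i = Pr(s^{t+1} = i | s^t = j, a^t = a); q t i = Pr(b^t = 1 | s^{t+1} = i).\<close>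

definition prob_simplex :: "('act::finite \<Rightarrow> real) set" where
  "prob_simplex = {p. (\<forall>a. 0 \<le> p a) \<and> (\<Sum>a\<in>UNIV. p a) = 1}"

definition ip :: "('act::finite \<Rightarrow> real) \<Rightarrow> ('act \<Rightarrow> real) \<Rightarrow> real" where
  "ip p v = (\<Sum>a\<in>UNIV. p a * v a)"

definition stage_vec ::
  "(nat \<Rightarrow> real^'n^'n) \<Rightarrow> (nat \<Rightarrow> real^'m^'n) \<Rightarrow> (nat \<Rightarrow> 'act \<Rightarrow> 'f::finite \<Rightarrow> 'f \<Rightarrow> real)
   \<Rightarrow> (nat \<Rightarrow> 'f \<Rightarrow> real) \<Rightarrow> (nat \<Rightarrow> real^'n \<Rightarrow> real^'m \<Rightarrow> real) \<Rightarrow> (nat \<Rightarrow> 'act \<Rightarrow> 'f \<Rightarrow> real)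
   \<Rightarrow> nat \<Rightarrow> (real^'n \<Rightarrow> 'f \<Rightarrow> real) \<Rightarrow> real^'n \<Rightarrow> 'f \<Rightarrow> real^'m \<Rightarrow> 'act \<Rightarrow> real" where
  "stage_vec A B P q \<sigma> g t W x s u a =
     \<sigma> t x u - g t a s
     + (\<Sum>i\<in>UNIV. P t a s i * (q t i * W (A t *v x + B t *v u) i + (1 - q t i) * W (A t *v x) i))"

text \<open>Backward recursion: Vrec k = V_{T-k}.\<close>
fun Vrec ::
  "nat \<Rightarrow> (nat \<Rightarrow> real^'n^'n) \<Rightarrow> (nat \<Rightarrow> real^'m^'n) \<Rightarrow> (nat \<Rightarrow> 'act::finite \<Rightarrow> 'f::finite \<Rightarrow> 'f \<Rightarrow> real)
   \<Rightarrow> (nat \<Rightarrow> 'f \<Rightarrow> real) \<Rightarrow> (nat \<Rightarrow> real^'n \<Rightarrow> real^'m \<Rightarrow> real) \<Rightarrow> (real^'n \<Rightarrow> real)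
   \<Rightarrow> (nat \<Rightarrow> 'act \<Rightarrow> 'f \<Rightarrow> real) \<Rightarrow> ('f \<Rightarrow> real) \<Rightarrow> nat \<Rightarrow> real^'n \<Rightarrow> 'f \<Rightarrow> real" where
  "Vrec T A B P q \<sigma> \<sigma>T g gT 0 x s = \<sigma>T x - gT s"
| "Vrec T A B P q \<sigma> \<sigma>T g gT (Suc k) x s =
     real_of_ereal (INF u\<in>UNIV. SUP p\<in>prob_simplex.
        ereal (ip p (stage_vec A B P q \<sigma> g (T - Suc k) (Vrec T A B P q \<sigma> \<sigma>T g gT k) x s u)))"

text \<open>Value function V_t (meaningful for t \<le> T).\<close>
definition Vfun where
  "Vfun T A B P q \<sigma> \<sigma>T g gT t = Vrec T A B P q \<sigma> \<sigma>T g gT (T - t)"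

text \<open>Game dynamics along a realisation \<omega> t = (a^t, s^{t+1}, b^t), under controller
  feedback strategy u t x s.\<close>
fun traj ::
  "(nat \<Rightarrow> real^'n^'n) \<Rightarrow> (nat \<Rightarrow> real^'m^'n) \<Rightarrow> (nat \<Rightarrow> real^'n \<Rightarrow> 'f \<Rightarrow> real^'m)
   \<Rightarrow> real^'n \<Rightarrow> 'f \<Rightarrow> (nat \<Rightarrow> 'act \<times> 'f \<times> bool) \<Rightarrow> nat \<Rightarrow> (real^'n) \<times> 'f" where
  "traj A B u x0 s0 \<omega> 0 = (x0, s0)"
| "traj A B u x0 s0 \<omega> (Suc t) =
     (let (x, s) = traj A B u x0 s0 \<omega> t; (a, s', b) = \<omega> t
      in (A t *v x + of_bool b *\<^sub>R (B t *v u t x s), s'))"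

definition path_prob ::
  "nat \<Rightarrow> (nat \<Rightarrow> real^'n^'n) \<Rightarrow> (nat \<Rightarrow> real^'m^'n) \<Rightarrow> (nat \<Rightarrow> 'act \<Rightarrow> 'f \<Rightarrow> 'f \<Rightarrow> real)
   \<Rightarrow> (nat \<Rightarrow> 'f \<Rightarrow> real) \<Rightarrow> (nat \<Rightarrow> real^'n \<Rightarrow> 'f \<Rightarrow> real^'m)
   \<Rightarrow> (nat \<Rightarrow> real^'n \<Rightarrow> 'f \<Rightarrow> real^'m \<Rightarrow> 'act \<Rightarrow> real)
   \<Rightarrow> real^'n \<Rightarrow> 'f \<Rightarrow> (nat \<Rightarrow> 'act \<times> 'f \<times> bool) \<Rightarrow> real" where
  "path_prob T A B P q u p x0 s0 \<omega> =
     (\<Prod>t<T. let (x, s) = traj A B u x0 s0 \<omega> t; (a, s', b) = \<omega> t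
             in p t x s (u t x s) a * P t a s s' * (if b then q t s' else 1 - q t s'))"

definition payoff ::
  "nat \<Rightarrow> (nat \<Rightarrow> real^'n^'n) \<Rightarrow> (nat \<Rightarrow> real^'m^'n) \<Rightarrow> (nat \<Rightarrow> real^'n \<Rightarrow> real^'m \<Rightarrow> real)
   \<Rightarrow> (real^'n \<Rightarrow> real) \<Rightarrow> (nat \<Rightarrow> 'act \<Rightarrow> 'f \<Rightarrow> real) \<Rightarrow> ('f \<Rightarrow> real)
   \<Rightarrow> (nat \<Rightarrow> real^'n \<Rightarrow> 'f \<Rightarrow> real^'m)
   \<Rightarrow> real^'n \<Rightarrow> 'f \<Rightarrow> (nat \<Rightarrow> 'act \<times> 'f \<times> bool) \<Rightarrow> real" where
  "payoff T A B \<sigma> \<sigma>T g gT u x0 s0 \<omega> =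
     (\<Sum>t<T. let (x, s) = traj A B u x0 s0 \<omega> t; (a, s', b) = \<omega> t
            in \<sigma> t x (u t x s) - g t a s)
     + \<sigma>T (fst (traj A B u x0 s0 \<omega> T)) - gT (snd (traj A B u x0 s0 \<omega> T))"

definition expected_payoff ::
  "nat \<Rightarrow> (nat \<Rightarrow> real^'n^'n) \<Rightarrow> (nat \<Rightarrow> real^'m^'n) \<Rightarrow> (nat \<Rightarrow> 'act::finite \<Rightarrow> 'f::finite \<Rightarrow> 'f \<Rightarrow> real)
   \<Rightarrow> (nat \<Rightarrow> 'f \<Rightarrow> real) \<Rightarrow> (nat \<Rightarrow> real^'n \<Rightarrow> real^'m \<Rightarrow> real)
   \<Rightarrow> (real^'n \<Rightarrow> real) \<Rightarrow> (nat \<Rightarrow> 'act \<Rightarrow> 'f \<Rightarrow> real) \<Rightarrow> ('f \<Rightarrow> real)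
   \<Rightarrow> real^'n \<Rightarrow> 'f
   \<Rightarrow> (nat \<Rightarrow> real^'n \<Rightarrow> 'f \<Rightarrow> real^'m)
   \<Rightarrow> (nat \<Rightarrow> real^'n \<Rightarrow> 'f \<Rightarrow> real^'m \<Rightarrow> 'act \<Rightarrow> real) \<Rightarrow> real" where
  "expected_payoff T A B P q \<sigma> \<sigma>T g gT x0 s0 u p =
     (\<Sum>\<omega>\<in>PiE {..<T} (\<lambda>_. UNIV).
        path_prob T A B P q u p x0 s0 \<omega> * payoff T A B \<sigma> \<sigma>T g gT u x0 s0 \<omega>)"

definition jammer_strats :: "nat \<Rightarrow> (nat \<Rightarrow> real^'n \<Rightarrow> 'f \<Rightarrow> real^'m \<Rightarrow> 'act::finite \<Rightarrow> real) set" where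
  "jammer_strats T = {p. \<forall>t<T. \<forall>x s u. p t x s u \<in> prob_simplex}"

definition saddle_point where
  "saddle_point T A B P q \<sigma> \<sigma>T g gT x0 s0 us ps \<longleftrightarrow>
     ps \<in> jammer_strats T \<and>
     ereal (expected_payoff T A B P q \<sigma> \<sigma>T g gT x0 s0 us ps)
       = (INF u\<in>UNIV. SUP p\<in>jammer_strats T. ereal (expected_payoff T A B P q \<sigma> \<sigma>T g gT x0 s0 u p)) \<and>
     ereal (expected_payoff T A B P q \<sigma> \<sigma>T g gT x0 s0 us ps)
       = (SUP p\<in>jammer_strats T. INF u\<in>UNIV. ereal (expected_payoff T A B P q \<sigma> \<sigma>T g gT x0 s0 u p))"

end

theory Submission
  imports Defs
begin

text \<open>The value functions are built by backward induction, carrying the invariant that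
  \<open>V\<^sub>t\<^sub>+\<^sub>1(\<cdot>, i)\<close> is convex and bounded below. Under it every coordinate of \<open>\<V>\<^sub>t\<close> is jointly
  convex in \<open>(x, u)\<close>, continuous and coercive in \<open>u\<close>, so the worst case \<open>max\<^sub>a\<close> is minimised
  by some \<open>u\<^sup>*\<close>; the minimal value is again convex in \<open>x\<close> (partial minimisation of a jointly
  convex function) and bounded below, and convexity on \<open>\<real>\<^sup>n\<close> gives continuity. Separating
  \<open>0\<close> from the upward closure of \<open>{\<V>\<^sub>t(u) - V\<^sub>t}\<close> by a hyperplane produces a mixed strategy
  \<open>p\<^sup>*\<close> with \<open>p\<^sup>*'\<V>\<^sub>t(u) \<ge> V\<^sub>t\<close> for all \<open>u\<close>, so each stage game has a saddle point with value
  \<open>V\<^sub>t\<close>. Finally, the expected payoff satisfies the one-step recursion behind \<open>\<V>\<^sub>t\<close>, so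
  comparing it with \<open>V\<close> stage by stage gives \<open>E(u\<^sup>*, p) \<le> V\<^sub>0 \<le> E(u, p\<^sup>*)\<close>.\<close>

section \<open>Mixed strategies and saddle points\<close>

lemma ip_mono:
  assumes "p \<in> prob_simplex" "\<And>a. v a \<le> w a"
  shows "ip p v \<le> ip p w"
  using assms unfolding ip_def prob_simplex_def by (auto intro: sum_mono mult_left_mono)

lemma ip_le_Max:
  assumes "p \<in> prob_simplex"
  shows "ip p v \<le> Max (range v)"
proof -
  have "ip p v \<le> ip p (\<lambda>_. Max (range v))"
    by (rule ip_mono[OF assms]) simp
  also have "\<dots> = Max (range v)"
    using assms by (simp add: ip_def prob_simplex_def flip: sum_distrib_right)
  finally show ?thesis .
qed

lemma ip_vertex: "ip (\<lambda>b. if b = a then 1 else 0) v = v a"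
  unfolding ip_def by (simp add: mult_delta_left)

lemma vertex_in_prob_simplex: "(\<lambda>b. if b = a then 1 else 0) \<in> prob_simplex"
  by (simp add: prob_simplex_def)

lemma SUP_prob_simplex_ip: "(SUP p\<in>prob_simplex. ereal (ip p v)) = ereal (Max (range v))"
proof (rule antisym)
  show "(SUP p\<in>prob_simplex. ereal (ip p v)) \<le> ereal (Max (range v))"
    by (rule SUP_least) (simp add: ip_le_Max)
  obtain a where "Max (range v) = v a"
    using Max_in[of "range v"] by fastforce
  then show "ereal (Max (range v)) \<le> (SUP p\<in>prob_simplex. ereal (ip p v))"
    using SUP_upper[OF vertex_in_prob_simplex, of "\<lambda>p. ereal (ip p v)" a] by (simp add: ip_vertex)
qed

lemma INF_SUP_prob_simplex_attained:
  assumes "\<And>u. Max (range (F u0)) \<le> Max (range (F u))"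
  shows "(INF u. SUP p\<in>prob_simplex. ereal (ip p (F u))) = ereal (Max (range (F u0)))"
  unfolding SUP_prob_simplex_ip
  by (rule antisym[OF INF_lower INF_greatest]) (simp_all add: assms)

definition saddle :: "'p set \<Rightarrow> ('u \<Rightarrow> 'p \<Rightarrow> real) \<Rightarrow> 'u \<Rightarrow> 'p \<Rightarrow> real \<Rightarrow> bool" where
  "saddle S f u0 p0 v \<longleftrightarrow> p0 \<in> S \<and> (\<forall>p\<in>S. f u0 p \<le> v) \<and> (\<forall>u. v \<le> f u p0)"

lemma saddle_value:
  assumes "saddle S f u0 p0 v"
  shows "(INF u. SUP p\<in>S. ereal (f u p)) = ereal v"
    and "(SUP p\<in>S. INF u. ereal (f u p)) = ereal v"
    and "f u0 p0 = v"
proof -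
  have p0: "p0 \<in> S" and upper: "\<And>p. p \<in> S \<Longrightarrow> f u0 p \<le> v" and lower: "\<And>u. v \<le> f u p0"
    using assms by (auto simp: saddle_def)
  have "(INF u. SUP p\<in>S. ereal (f u p)) \<le> (SUP p\<in>S. ereal (f u0 p))"
    by (rule INF_lower) simp
  also have "\<dots> \<le> ereal v"
    by (rule SUP_least) (simp add: upper)
  finally have "(INF u. SUP p\<in>S. ereal (f u p)) \<le> ereal v" .
  moreover have "ereal v \<le> (INF u. SUP p\<in>S. ereal (f u p))"
    by (rule INF_greatest, rule order_trans[OF _ SUP_upper[OF p0]]) (simp add: lower)
  ultimately show "(INF u. SUP p\<in>S. ereal (f u p)) = ereal v"
    by (rule antisym)
  have "(SUP p\<in>S. INF u. ereal (f u p)) \<le> ereal v"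
    by (rule SUP_least, rule order_trans[OF INF_lower[of u0]]) (simp_all add: upper)
  moreover have "ereal v \<le> (INF u. ereal (f u p0))"
    by (rule INF_greatest) (simp add: lower)
  then have "ereal v \<le> (SUP p\<in>S. INF u. ereal (f u p))"
    using SUP_upper[OF p0, of "\<lambda>p. INF u. ereal (f u p)"] by (rule order_trans)
  ultimately show "(SUP p\<in>S. INF u. ereal (f u p)) = ereal v"
    by (rule antisym)
  show "f u0 p0 = v"
    using upper[OF p0] lower[of u0] by (rule antisym)
qed

lemma saddle_optimal:
  assumes "saddle S f u0 p0 v"
  shows "(SUP p\<in>S. ereal (f u0 p)) \<le> (SUP p\<in>S. ereal (f u p))"
    and "p \<in> S \<Longrightarrow> (INF u. ereal (f u p)) \<le> (INF u. ereal (f u p0))"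
proof -
  have p0: "p0 \<in> S" and upper: "\<And>p. p \<in> S \<Longrightarrow> f u0 p \<le> v" and lower: "\<And>u. v \<le> f u p0"
    using assms by (auto simp: saddle_def)
  have "(SUP p\<in>S. ereal (f u0 p)) \<le> ereal (f u p0)"
    by (rule SUP_least) (use upper lower order_trans in fastforce)
  also have "\<dots> \<le> (SUP p\<in>S. ereal (f u p))"
    by (rule SUP_upper[OF p0])
  finally show "(SUP p\<in>S. ereal (f u0 p)) \<le> (SUP p\<in>S. ereal (f u p))" .
  assume "p \<in> S"
  have "(INF u. ereal (f u p)) \<le> ereal (f u0 p)"
    by (rule INF_lower) simp
  also have "\<dots> \<le> (INF u. ereal (f u p0))"
    by (rule INF_greatest) (use upper[OF \<open>p \<in> S\<close>] lower order_trans in fastforce)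
  finally show "(INF u. ereal (f u p)) \<le> (INF u. ereal (f u p0))" .
qed

lemma saddle_of_optimal:
  assumes "saddle S f u0 p0 v"
    and u1: "\<And>u. (SUP p\<in>S. ereal (f u1 p)) \<le> (SUP p\<in>S. ereal (f u p))"
    and p1: "p1 \<in> S" "\<And>p. p \<in> S \<Longrightarrow> (INF u. ereal (f u p)) \<le> (INF u. ereal (f u p1))"
  shows "saddle S f u1 p1 v"
  unfolding saddle_def
proof (intro conjI ballI allI p1(1))
  fix p assume "p \<in> S"
  have "ereal (f u1 p) \<le> (SUP p\<in>S. ereal (f u1 p))"
    by (rule SUP_upper[OF \<open>p \<in> S\<close>])
  also have "\<dots> \<le> (INF u. SUP p\<in>S. ereal (f u p))"
    by (rule INF_greatest) (rule u1)
  finally show "f u1 p \<le> v"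
    using saddle_value(1)[OF assms(1)] by simp
next
  fix u
  have "ereal v = (SUP p\<in>S. INF u. ereal (f u p))"
    using saddle_value(2)[OF assms(1)] by simp
  also have "\<dots> \<le> (INF u. ereal (f u p1))"
    by (rule SUP_least) (rule p1(2))
  also have "\<dots> \<le> ereal (f u p1)"
    by (rule INF_lower) simp
  finally show "v \<le> f u p1" by simp
qed

section \<open>Convexity, coercivity and a finite minimax lemma\<close>

lemma convex_on_UNIV_D:
  assumes "convex_on UNIV f" "0 \<le> l" "0 \<le> m" "l + m = 1"
  shows "f (l *\<^sub>R x + m *\<^sub>R y) \<le> l * f x + m * f y"
  using assms by (simp add: convex_on_def)

lemma continuous_on_Max_image:
  fixes F :: "'a::topological_space \<Rightarrow> 'b \<Rightarrow> real"
  assumes "finite I" "I \<noteq> {}" "\<And>i. i \<in> I \<Longrightarrow> continuous_on S (\<lambda>x. F x i)"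
  shows "continuous_on S (\<lambda>x. Max (F x ` I))"
  using assms
proof (induction I rule: finite_ne_induct)
  case (insert i I)
  then show ?case
    by (simp add: Max_insert continuous_on_max)
qed simp

lemma coercive_continuous_attains_inf:
  fixes h :: "'a::euclidean_space \<Rightarrow> real"
  assumes cont: "continuous_on UNIV h"
    and coercive: "\<And>M. \<exists>R. \<forall>u. R < norm u \<longrightarrow> M < h u"
  shows "\<exists>u0. \<forall>u. h u0 \<le> h u"
proof -
  obtain R where R: "\<And>u. R < norm u \<Longrightarrow> h 0 < h u"
    using coercive[of "h 0"] by blast
  have "continuous_on (cball 0 (max R 0)) h"
    using cont by (rule continuous_on_subset) simp
  moreover have "cball 0 (max R 0) \<noteq> {}"
    by simp
  ultimately obtain u0 where u0: "\<forall>u\<in>cball 0 (max R 0). h u0 \<le> h u"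
    using continuous_attains_inf[OF compact_cball] by blast
  have "h u0 \<le> h u" for u
  proof (cases "norm u \<le> max R 0")
    case False
    then have "h 0 < h u" by (intro R) simp
    moreover have "h u0 \<le> h 0" using u0 by simp
    ultimately show ?thesis by simp
  qed (use u0 in simp)
  then show ?thesis by blast
qed

lemma convex_on_compose_linear:
  assumes "linear L" "convex_on UNIV f"
  shows "convex_on UNIV (\<lambda>x. f (L x))"
  using assms(2) by (simp add: convex_on_def linear_add[OF assms(1)] linear_scale[OF assms(1)])

lemma convex_on_sum_fun:
  assumes "finite I" "convex S" "\<And>i. i \<in> I \<Longrightarrow> convex_on S (f i)"
  shows "convex_on S (\<lambda>x. \<Sum>i\<in>I. f i x)"
  using assms by (induction I rule: finite_induct) (simp_all add: convex_on_const convex_on_add)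

lemma convex_on_Max_range:
  fixes f :: "'a::real_vector \<Rightarrow> 'b::finite \<Rightarrow> real"
  assumes "\<And>b. convex_on UNIV (\<lambda>x. f x b)"
  shows "convex_on UNIV (\<lambda>x. Max (range (f x)))"
  unfolding convex_on_def
proof (intro conjI ballI allI impI convex_UNIV)
  fix x y :: 'a and l m :: real
  assume lm: "0 \<le> l" "0 \<le> m" "l + m = 1"
  show "Max (range (f (l *\<^sub>R x + m *\<^sub>R y))) \<le> l * Max (range (f x)) + m * Max (range (f y))"
  proof (rule Max.boundedI)
    fix z assume "z \<in> range (f (l *\<^sub>R x + m *\<^sub>R y))"
    then obtain b where z: "z = f (l *\<^sub>R x + m *\<^sub>R y) b" by blast
    have "z \<le> l * f x b + m * f y b"
      unfolding z by (rule convex_on_UNIV_D[OF assms lm])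
    also have "\<dots> \<le> l * Max (range (f x)) + m * Max (range (f y))"
      using lm by (intro add_mono mult_left_mono) auto
    finally show "z \<le> l * Max (range (f x)) + m * Max (range (f y))" .
  qed auto
qed

lemma convex_on_slice:
  fixes G :: "'a::real_vector \<Rightarrow> 'b::real_vector \<Rightarrow> real"
  assumes "convex_on UNIV (\<lambda>(x, u). G x u)"
  shows "convex_on UNIV (G x)"
  unfolding convex_on_def
proof (intro conjI ballI allI impI convex_UNIV)
  fix u u' :: 'b and l m :: real
  assume lm: "0 \<le> l" "0 \<le> m" "l + m = 1"
  have "l *\<^sub>R (x, u) + m *\<^sub>R (x, u') = (x, l *\<^sub>R u + m *\<^sub>R u')"
    using lm by (simp flip: scaleR_left_distrib)
  then show "G x (l *\<^sub>R u + m *\<^sub>R u') \<le> l * G x u + m * G x u'"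
    using convex_on_UNIV_D[OF assms lm, of "(x, u)" "(x, u')"] by simp
qed

lemma convex_on_partial_min:
  fixes G :: "'a::real_vector \<Rightarrow> 'b::real_vector \<Rightarrow> real"
  assumes conv: "convex_on UNIV (\<lambda>(x, u). G x u)"
    and min: "\<And>x u. G x (h x) \<le> G x u"
  shows "convex_on UNIV (\<lambda>x. G x (h x))"
  unfolding convex_on_def
proof (intro conjI ballI allI impI convex_UNIV)
  fix x y :: 'a and l m :: real
  assume lm: "0 \<le> l" "0 \<le> m" "l + m = 1"
  have "G (l *\<^sub>R x + m *\<^sub>R y) (h (l *\<^sub>R x + m *\<^sub>R y))
      \<le> G (l *\<^sub>R x + m *\<^sub>R y) (l *\<^sub>R h x + m *\<^sub>R h y)"
    by (rule min)
  also have "\<dots> = (\<lambda>(x, u). G x u) (l *\<^sub>R (x, h x) + m *\<^sub>R (y, h y))"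
    by simp
  also have "\<dots> \<le> l * G x (h x) + m * G y (h y)"
    using convex_on_UNIV_D[OF conv lm, of "(x, h x)" "(y, h y)"] by simp
  finally show "G (l *\<^sub>R x + m *\<^sub>R y) (h (l *\<^sub>R x + m *\<^sub>R y)) \<le> l * G x (h x) + m * G y (h y)" .
qed

lemma convex_combination_strict_less:
  fixes a b c d l m :: real
  assumes "a < b" "c < d" "0 \<le> l" "0 \<le> m" "l + m = 1"
  shows "l * a + m * c < l * b + m * d"
proof (cases "l = 0")
  case True
  then show ?thesis using assms by simp
next
  case False
  then have "l * a < l * b" using assms by simp
  moreover have "m * c \<le> m * d" using assms by (simp add: mult_left_mono)
  ultimately show ?thesis by simp
qed

text \<open>The weights are the normal of a hyperplane separating \<open>0\<close> from the open upward closure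
  of the shifted family \<open>{F u - v}\<close>.\<close>
lemma ex_prob_simplex_ip_ge:
  fixes F :: "'u::real_vector \<Rightarrow> 'act::finite \<Rightarrow> real"
  assumes conv: "\<And>a. convex_on UNIV (\<lambda>u. F u a)"
    and below_max: "\<And>u. v \<le> Max (range (F u))"
  shows "\<exists>p\<in>prob_simplex. \<forall>u. v \<le> ip p (F u)"
proof -
  define S :: "(real^'act) set" where "S = {z. \<exists>u. \<forall>a. F u a - v < z$a}"
  have inner_eq: "inner c z = (\<Sum>a\<in>UNIV. c$a * z$a)" for c z :: "real^'act"
    by (simp add: inner_vec_def)
  have in_S: "(\<chi> a. F u a - v + e) \<in> S" if "0 < e" for u e
    using that by (auto simp: S_def intro!: exI[of _ u])
  have "convex S"
  proof (rule convexI)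
    fix z1 z2 :: "real^'act" and l m :: real
    assume "z1 \<in> S" "z2 \<in> S" and lm: "0 \<le> l" "0 \<le> m" "l + m = 1"
    then obtain u1 u2 where u1: "\<And>a. F u1 a - v < z1$a" and u2: "\<And>a. F u2 a - v < z2$a"
      by (auto simp: S_def)
    have "F (l *\<^sub>R u1 + m *\<^sub>R u2) a - v < (l *\<^sub>R z1 + m *\<^sub>R z2)$a" for a
    proof -
      have "F (l *\<^sub>R u1 + m *\<^sub>R u2) a - v \<le> l * F u1 a + m * F u2 a - v"
        using convex_on_UNIV_D[OF conv lm, of u1 u2] by simp
      then have "F (l *\<^sub>R u1 + m *\<^sub>R u2) a - v \<le> l * (F u1 a - v) + m * (F u2 a - v)"
        using lm by (simp add: algebra_simps flip: distrib_right)
      also have "\<dots> < l * z1$a + m * z2$a"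
        using convex_combination_strict_less[OF u1 u2 lm] .
      finally show ?thesis by simp
    qed
    then show "l *\<^sub>R z1 + m *\<^sub>R z2 \<in> S" by (auto simp: S_def)
  qed
  moreover have "0 \<notin> S"
  proof
    assume "0 \<in> S"
    then obtain u where "\<And>a. F u a < v" by (auto simp: S_def)
    moreover obtain a where "Max (range (F u)) = F u a"
      using Max_in[of "range (F u)"] by fastforce
    ultimately show False using below_max[of u] by (metis not_less)
  qed
  ultimately obtain c :: "real^'act" where "c \<noteq> 0" and c: "\<And>z. z \<in> S \<Longrightarrow> 0 \<le> inner c z"
    using separating_hyperplane_set_0[of S] by auto
  have c_nonneg: "0 \<le> c$a" for a
  proof (rule ccontr)
    assume neg: "\<not> 0 \<le> c$a"
    define z0 where "z0 = (\<chi> b. F 0 b - v + 1)"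
    define t where "t = (inner c z0 + 1) / - c$a"
    have "0 \<le> inner c z0" unfolding z0_def by (rule c[OF in_S]) simp
    then have "0 \<le> t" using neg unfolding t_def by (intro divide_nonneg_pos) auto
    then have "z0 + t *\<^sub>R axis a 1 \<in> S"
      unfolding S_def z0_def by (auto intro!: exI[of _ 0] simp: axis_def)
    then have "0 \<le> inner c (z0 + t *\<^sub>R axis a 1)"
      by (rule c)
    then have "0 \<le> inner c z0 + t * c$a"
      by (simp add: inner_add_right inner_axis)
    moreover have "t * c$a = - (inner c z0 + 1)"
      using neg by (simp add: t_def)
    ultimately show False by simp
  qed
  define w where "w = (\<Sum>a\<in>UNIV. c$a)"
  have "0 < w"
  proof -
    obtain a where "c$a \<noteq> 0" using \<open>c \<noteq> 0\<close> by (metis vec_eq_iff zero_index)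
    then show ?thesis
      unfolding w_def using c_nonneg by (intro sum_pos2[of _ a]) (auto simp: order_le_less)
  qed
  have weighted: "v * w \<le> (\<Sum>a\<in>UNIV. c$a * F u a)" for u
  proof (rule field_le_epsilon)
    fix e :: real assume "0 < e"
    have "0 \<le> inner c (\<chi> a. F u a - v + e / w)"
      using c[OF in_S] \<open>0 < e\<close> \<open>0 < w\<close> by simp
    also have "\<dots> = (\<Sum>a\<in>UNIV. c$a * F u a) - v * w + e / w * w"
      by (simp add: inner_eq w_def distrib_left right_diff_distrib sum.distrib sum_subtractf
          sum_distrib_left sum_distrib_right sum_divide_distrib mult.commute)
    also have "\<dots> = (\<Sum>a\<in>UNIV. c$a * F u a) - v * w + e"
      using \<open>0 < w\<close> by simp
    finally show "v * w \<le> (\<Sum>a\<in>UNIV. c$a * F u a) + e" by simp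
  qed
  have "v \<le> ip (\<lambda>a. c$a / w) (F u)" for u
    using weighted[of u] \<open>0 < w\<close> by (simp add: ip_def pos_le_divide_eq flip: sum_divide_distrib)
  moreover have "(\<lambda>a. c$a / w) \<in> prob_simplex"
    using c_nonneg \<open>0 < w\<close> by (simp add: prob_simplex_def w_def flip: sum_divide_distrib)
  ultimately show ?thesis by blast
qed

section \<open>Dynamic programming for the expected payoff\<close>

lemma sum_PiE_lessThan_Suc:
  fixes F :: "(nat \<Rightarrow> 'c::finite) \<Rightarrow> real"
  shows "(\<Sum>\<omega>\<in>PiE {..<Suc n} (\<lambda>_. UNIV). F \<omega>) =
         (\<Sum>c\<in>UNIV. \<Sum>\<omega>\<in>PiE {..<n} (\<lambda>_. UNIV). F (case_nat c \<omega>))"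
proof -
  have "bij_betw (\<lambda>(c, \<omega>). case_nat c \<omega>) (UNIV \<times> PiE {..<n} (\<lambda>_. UNIV)) (PiE {..<Suc n} (\<lambda>_. UNIV))"
    by (rule bij_betwI[where g = "\<lambda>\<omega>. (\<omega> 0, \<lambda>k. \<omega> (Suc k))"])
      (auto simp: PiE_def extensional_def split: nat.split)
  from sum.reindex_bij_betw[OF this, of F, symmetric] show ?thesis
    by (simp add: sum.cartesian_product case_prod_beta)
qed

lemma sum_UNIV_triple:
  fixes f :: "'a::finite \<times> 'b::finite \<times> bool \<Rightarrow> real"
  shows "(\<Sum>c\<in>UNIV. f c) = (\<Sum>a\<in>UNIV. \<Sum>s\<in>UNIV. f (a, s, True) + f (a, s, False))"
proof -
  have "(\<Sum>c\<in>UNIV. f c) = (\<Sum>a\<in>UNIV. \<Sum>s\<in>UNIV. \<Sum>b\<in>UNIV. f (a, s, b))"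
    by (simp add: sum.cartesian_product split_def)
  then show ?thesis
    by (simp add: UNIV_bool add.commute)
qed

lemma traj_case_nat:
  "traj A B u x0 s0 (case_nat (a, s', b) \<omega>) (Suc n) =
   traj (A \<circ> Suc) (B \<circ> Suc) (u \<circ> Suc) (A 0 *v x0 + of_bool b *\<^sub>R (B 0 *v u 0 x0 s0)) s' \<omega> n"
  by (induction n) (simp_all add: split_def)

lemma path_prob_case_nat:
  "path_prob (Suc T) A B P q u p x0 s0 (case_nat (a, s', b) \<omega>) =
   p 0 x0 s0 (u 0 x0 s0) a * P 0 a s0 s' * (if b then q 0 s' else 1 - q 0 s') *
   path_prob T (A \<circ> Suc) (B \<circ> Suc) (P \<circ> Suc) (q \<circ> Suc) (u \<circ> Suc) (p \<circ> Suc)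
     (A 0 *v x0 + of_bool b *\<^sub>R (B 0 *v u 0 x0 s0)) s' \<omega>"
  unfolding path_prob_def
  by (simp only: prod.lessThan_Suc_shift traj_case_nat nat.case traj.simps(1) comp_apply) simp

lemma payoff_case_nat:
  "payoff (Suc T) A B \<sigma> \<sigma>T g gT u x0 s0 (case_nat (a, s', b) \<omega>) =
   \<sigma> 0 x0 (u 0 x0 s0) - g 0 a s0 +
   payoff T (A \<circ> Suc) (B \<circ> Suc) (\<sigma> \<circ> Suc) \<sigma>T (g \<circ> Suc) gT (u \<circ> Suc)
     (A 0 *v x0 + of_bool b *\<^sub>R (B 0 *v u 0 x0 s0)) s' \<omega>"
  unfolding payoff_def
  by (simp only: sum.lessThan_Suc_shift traj_case_nat nat.case traj.simps(1) comp_apply) simp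

lemma sum_PiE_lessThan_Suc_triple:
  fixes F :: "(nat \<Rightarrow> 'a::finite \<times> 'b::finite \<times> bool) \<Rightarrow> real"
  shows "(\<Sum>\<omega>\<in>PiE {..<Suc n} (\<lambda>_. UNIV). F \<omega>) =
    (\<Sum>a\<in>UNIV. \<Sum>s\<in>UNIV. (\<Sum>\<omega>\<in>PiE {..<n} (\<lambda>_. UNIV). F (case_nat (a, s, True) \<omega>))
                        + (\<Sum>\<omega>\<in>PiE {..<n} (\<lambda>_. UNIV). F (case_nat (a, s, False) \<omega>)))"
  unfolding sum_PiE_lessThan_Suc by (rule sum_UNIV_triple)

lemma jammer_strats_Suc:
  assumes "p \<in> jammer_strats (Suc T)"
  shows "p \<circ> Suc \<in> jammer_strats T" and "p 0 x s u \<in> prob_simplex"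
  using assms by (auto simp: jammer_strats_def)

lemma sum_path_prob:
  fixes P :: "nat \<Rightarrow> 'act::finite \<Rightarrow> 'f::finite \<Rightarrow> 'f \<Rightarrow> real"
  assumes "p \<in> jammer_strats T" "\<And>t a j. (\<Sum>i\<in>UNIV. P t a j i) = 1"
  shows "(\<Sum>\<omega>\<in>PiE {..<T} (\<lambda>_. UNIV). path_prob T A B P q u p x0 s0 \<omega>) = 1"
  using assms
proof (induction T arbitrary: A B P q u p x0 s0)
  case 0
  then show ?case by (simp add: path_prob_def)
next
  case (Suc T)
  let ?p0 = "p 0 x0 s0 (u 0 x0 s0)"
  have IH: "(\<Sum>\<omega>\<in>PiE {..<T} (\<lambda>_. UNIV).
      path_prob T (A \<circ> Suc) (B \<circ> Suc) (P \<circ> Suc) (q \<circ> Suc) (u \<circ> Suc) (p \<circ> Suc) x s \<omega>) = 1" for x s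
    using Suc.prems by (intro Suc.IH jammer_strats_Suc(1)) simp_all
  have "(\<Sum>\<omega>\<in>PiE {..<Suc T} (\<lambda>_. UNIV). path_prob (Suc T) A B P q u p x0 s0 \<omega>)
      = (\<Sum>a\<in>UNIV. \<Sum>s\<in>UNIV. ?p0 a * P 0 a s0 s * q 0 s + ?p0 a * P 0 a s0 s * (1 - q 0 s))"
    by (simp only: sum_PiE_lessThan_Suc_triple path_prob_case_nat IH if_True if_False
        mult_1_right flip: sum_distrib_left)
  also have "\<dots> = (\<Sum>a\<in>UNIV. ?p0 a * (\<Sum>s\<in>UNIV. P 0 a s0 s))"
    by (simp add: algebra_simps sum_distrib_left sum_distrib_right)
  also have "\<dots> = (\<Sum>a\<in>UNIV. ?p0 a)"
    by (simp add: Suc.prems(2))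
  also have "\<dots> = 1"
    using jammer_strats_Suc(2)[OF Suc.prems(1)] by (simp add: prob_simplex_def)
  finally show ?case .
qed

lemma expected_payoff_affine:
  fixes P :: "nat \<Rightarrow> 'act::finite \<Rightarrow> 'f::finite \<Rightarrow> 'f \<Rightarrow> real"
  assumes "p \<in> jammer_strats T" "\<And>t a j. (\<Sum>i\<in>UNIV. P t a j i) = 1"
  shows "(\<Sum>\<omega>\<in>PiE {..<T} (\<lambda>_. UNIV).
            k * path_prob T A B P q u p x s \<omega> * (c + payoff T A B \<sigma> \<sigma>T g gT u x s \<omega>))
         = k * (c + expected_payoff T A B P q \<sigma> \<sigma>T g gT x s u p)"
proof -
  have "(\<Sum>\<omega>\<in>PiE {..<T} (\<lambda>_. UNIV).
          k * path_prob T A B P q u p x s \<omega> * (c + payoff T A B \<sigma> \<sigma>T g gT u x s \<omega>))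
      = k * c * (\<Sum>\<omega>\<in>PiE {..<T} (\<lambda>_. UNIV). path_prob T A B P q u p x s \<omega>)
        + k * expected_payoff T A B P q \<sigma> \<sigma>T g gT x s u p"
    by (simp add: expected_payoff_def sum.distrib sum_distrib_left algebra_simps)
  then show ?thesis
    using sum_path_prob[OF assms] by (simp add: algebra_simps)
qed

lemma expected_payoff_Suc:
  fixes P :: "nat \<Rightarrow> 'act::finite \<Rightarrow> 'f::finite \<Rightarrow> 'f \<Rightarrow> real"
  assumes p: "p \<in> jammer_strats (Suc T)" and P_stoch: "\<And>t a j. (\<Sum>i\<in>UNIV. P t a j i) = 1"
  shows "expected_payoff (Suc T) A B P q \<sigma> \<sigma>T g gT x0 s0 u p =
    ip (p 0 x0 s0 (u 0 x0 s0)) (stage_vec A B P q \<sigma> g 0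
      (\<lambda>x s. expected_payoff T (A \<circ> Suc) (B \<circ> Suc) (P \<circ> Suc) (q \<circ> Suc) (\<sigma> \<circ> Suc) \<sigma>T (g \<circ> Suc) gT
         x s (u \<circ> Suc) (p \<circ> Suc))
      x0 s0 (u 0 x0 s0))"
proof -
  let ?E = "\<lambda>x s. expected_payoff T (A \<circ> Suc) (B \<circ> Suc) (P \<circ> Suc) (q \<circ> Suc) (\<sigma> \<circ> Suc) \<sigma>T (g \<circ> Suc) gT
         x s (u \<circ> Suc) (p \<circ> Suc)"
  let ?pp = "path_prob T (A \<circ> Suc) (B \<circ> Suc) (P \<circ> Suc) (q \<circ> Suc) (u \<circ> Suc) (p \<circ> Suc)"
  let ?pay = "payoff T (A \<circ> Suc) (B \<circ> Suc) (\<sigma> \<circ> Suc) \<sigma>T (g \<circ> Suc) gT (u \<circ> Suc)"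
  let ?u0 = "u 0 x0 s0" and ?p0 = "p 0 x0 s0 (u 0 x0 s0)"
  let ?w = "\<lambda>a s b. ?p0 a * P 0 a s0 s * (if b then q 0 s else 1 - q 0 s)"
  let ?C = "\<lambda>a. \<sigma> 0 x0 ?u0 - g 0 a s0"
  let ?x = "\<lambda>b. A 0 *v x0 + of_bool b *\<^sub>R (B 0 *v ?u0)"
  have inner: "(\<Sum>\<omega>\<in>PiE {..<T} (\<lambda>_. UNIV). k * ?pp x s \<omega> * (c + ?pay x s \<omega>))
      = k * (c + ?E x s)" for k c x s
    using p P_stoch by (intro expected_payoff_affine jammer_strats_Suc(1)) simp_all
  have per_action: "(\<Sum>s\<in>UNIV. ?w a s True * (?C a + ?E (?x True) s) + ?w a s False * (?C a + ?E (?x False) s))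
      = ?p0 a * (?C a + (\<Sum>s\<in>UNIV. P 0 a s0 s *
          (q 0 s * ?E (A 0 *v x0 + B 0 *v ?u0) s + (1 - q 0 s) * ?E (A 0 *v x0) s)))" for a
  proof -
    have "?p0 a * (?C a + (\<Sum>s\<in>UNIV. P 0 a s0 s *
          (q 0 s * ?E (A 0 *v x0 + B 0 *v ?u0) s + (1 - q 0 s) * ?E (A 0 *v x0) s)))
        = ?p0 a * (?C a * (\<Sum>s\<in>UNIV. P 0 a s0 s) + (\<Sum>s\<in>UNIV. P 0 a s0 s *
          (q 0 s * ?E (A 0 *v x0 + B 0 *v ?u0) s + (1 - q 0 s) * ?E (A 0 *v x0) s)))"
      by (simp add: P_stoch)
    also have "\<dots> = (\<Sum>s\<in>UNIV. ?w a s True * (?C a + ?E (?x True) s) + ?w a s False * (?C a + ?E (?x False) s))"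
      by (simp add: sum_distrib_left sum_distrib_right sum.distrib[symmetric] algebra_simps)
    finally show ?thesis by simp
  qed
  have "expected_payoff (Suc T) A B P q \<sigma> \<sigma>T g gT x0 s0 u p
      = (\<Sum>a\<in>UNIV. \<Sum>s\<in>UNIV. ?w a s True * (?C a + ?E (?x True) s) + ?w a s False * (?C a + ?E (?x False) s))"
    unfolding expected_payoff_def[of "Suc T"]
    by (simp only: sum_PiE_lessThan_Suc_triple path_prob_case_nat payoff_case_nat inner)
  also have "\<dots> = ip ?p0 (stage_vec A B P q \<sigma> g 0 ?E x0 s0 ?u0)"
    by (simp only: per_action) (simp add: ip_def stage_vec_def)
  finally show ?thesis .
qed

lemma ip_stage_vec_mono:
  assumes P_nonneg: "\<And>a j i. 0 \<le> P t a j i" and q_range: "\<And>i. 0 \<le> q t i \<and> q t i \<le> 1"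
    and "p \<in> prob_simplex" and W: "\<And>x i. W x i \<le> W' x i"
  shows "ip p (stage_vec A B P q \<sigma> g t W x s u) \<le> ip p (stage_vec A B P q \<sigma> g t W' x s u)"
proof (rule ip_mono[OF \<open>p \<in> prob_simplex\<close>])
  fix a
  have "q t i * W y i + (1 - q t i) * W z i \<le> q t i * W' y i + (1 - q t i) * W' z i" for y z i
    using q_range[of i] by (intro add_mono mult_left_mono W) auto
  then show "stage_vec A B P q \<sigma> g t W x s u a \<le> stage_vec A B P q \<sigma> g t W' x s u a"
    unfolding stage_vec_def by (simp add: sum_mono mult_left_mono P_nonneg)
qed

lemma stage_vec_shift:
  "stage_vec (A \<circ> Suc) (B \<circ> Suc) (P \<circ> Suc) (q \<circ> Suc) (\<sigma> \<circ> Suc) (g \<circ> Suc) t = stage_vec A B P q \<sigma> g (Suc t)"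
  by (intro ext) (simp add: stage_vec_def)

lemma expected_payoff_0: "expected_payoff 0 A B P q \<sigma> \<sigma>T g gT x s u p = \<sigma>T x - gT s"
  by (simp add: expected_payoff_def path_prob_def payoff_def)

lemma expected_payoff_le:
  fixes P :: "nat \<Rightarrow> 'act::finite \<Rightarrow> 'f::finite \<Rightarrow> 'f \<Rightarrow> real"
  assumes "\<And>t a j i. 0 \<le> P t a j i" "\<And>t a j. (\<Sum>i\<in>UNIV. P t a j i) = 1"
    and "\<And>t i. 0 \<le> q t i \<and> q t i \<le> 1"
    and "p \<in> jammer_strats T"
    and "\<And>y r. J T y r = \<sigma>T y - gT r"
    and "\<And>t y r. t < T \<Longrightarrow>
      ip (p t y r (u t y r)) (stage_vec A B P q \<sigma> g t (J (Suc t)) y r (u t y r)) \<le> J t y r"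
  shows "expected_payoff T A B P q \<sigma> \<sigma>T g gT x s u p \<le> J 0 x s"
  using assms
  \<comment> \<open>the induction motive generalises eleven variables, beyond the default unifier search bound\<close>
  supply [[unify_search_bound = 100]]
proof (induction T arbitrary: x s A B P q \<sigma> g u p J)
  case 0
  then show ?case by (simp add: expected_payoff_0)
next
  case (Suc T)
  let ?E = "\<lambda>x s. expected_payoff T (A \<circ> Suc) (B \<circ> Suc) (P \<circ> Suc) (q \<circ> Suc) (\<sigma> \<circ> Suc) \<sigma>T (g \<circ> Suc) gT
         x s (u \<circ> Suc) (p \<circ> Suc)"
  have "?E x' s' \<le> (J \<circ> Suc) 0 x' s'" for x' s'
  proof (rule Suc.IH)
    show "p \<circ> Suc \<in> jammer_strats T"
      by (rule jammer_strats_Suc(1)[OF Suc.prems(4)])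
    show "ip ((p \<circ> Suc) t y r ((u \<circ> Suc) t y r)) (stage_vec (A \<circ> Suc) (B \<circ> Suc) (P \<circ> Suc) (q \<circ> Suc)
        (\<sigma> \<circ> Suc) (g \<circ> Suc) t ((J \<circ> Suc) (Suc t)) y r ((u \<circ> Suc) t y r)) \<le> (J \<circ> Suc) t y r"
      if "t < T" for t y r
      unfolding stage_vec_shift using Suc.prems(6)[of "Suc t"] that by simp
  qed (use Suc.prems in simp_all)
  then have "expected_payoff (Suc T) A B P q \<sigma> \<sigma>T g gT x s u p
      \<le> ip (p 0 x s (u 0 x s)) (stage_vec A B P q \<sigma> g 0 (J 1) x s (u 0 x s))"
    using Suc.prems by (simp add: expected_payoff_Suc ip_stage_vec_mono jammer_strats_Suc(2))
  also have "\<dots> \<le> J 0 x s"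
    using Suc.prems(6)[of 0] by simp
  finally show ?case .
qed

lemma expected_payoff_uminus:
  "expected_payoff T A B P q (\<lambda>t x u. - \<sigma> t x u) (\<lambda>x. - \<sigma>T x) (\<lambda>t a s. - g t a s) (\<lambda>s. - gT s) x s u p
   = - expected_payoff T A B P q \<sigma> \<sigma>T g gT x s u p"
proof -
  have "payoff T A B (\<lambda>t x u. - \<sigma> t x u) (\<lambda>x. - \<sigma>T x) (\<lambda>t a s. - g t a s) (\<lambda>s. - gT s) u x s \<omega>
      = - payoff T A B \<sigma> \<sigma>T g gT u x s \<omega>" for \<omega>
    by (simp add: payoff_def split_def Let_def sum_subtractf)
  then show ?thesis
    by (simp add: expected_payoff_def sum_negf)
qed

lemma ip_stage_vec_uminus:
  "ip p (stage_vec A B P q (\<lambda>t x u. - \<sigma> t x u) (\<lambda>t a s. - g t a s) t (\<lambda>x s. - W x s) x s u)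
   = - ip p (stage_vec A B P q \<sigma> g t W x s u)"
proof -
  have "stage_vec A B P q (\<lambda>t x u. - \<sigma> t x u) (\<lambda>t a s. - g t a s) t (\<lambda>x s. - W x s) x s u a
      = - stage_vec A B P q \<sigma> g t W x s u a" for a
    unfolding stage_vec_def by (simp add: algebra_simps flip: sum_negf sum.distrib)
  then show ?thesis
    by (simp add: ip_def sum_negf)
qed

text \<open>The lower bound follows from the upper one applied to the game with all costs negated.\<close>
lemma expected_payoff_ge:
  fixes P :: "nat \<Rightarrow> 'act::finite \<Rightarrow> 'f::finite \<Rightarrow> 'f \<Rightarrow> real"
  assumes "\<And>t a j i. 0 \<le> P t a j i" "\<And>t a j. (\<Sum>i\<in>UNIV. P t a j i) = 1"
    and "\<And>t i. 0 \<le> q t i \<and> q t i \<le> 1"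
    and "p \<in> jammer_strats T"
    and "\<And>y r. J T y r = \<sigma>T y - gT r"
    and "\<And>t y r. t < T \<Longrightarrow>
      J t y r \<le> ip (p t y r (u t y r)) (stage_vec A B P q \<sigma> g t (J (Suc t)) y r (u t y r))"
  shows "J 0 x s \<le> expected_payoff T A B P q \<sigma> \<sigma>T g gT x s u p"
proof -
  have "expected_payoff T A B P q (\<lambda>t x u. - \<sigma> t x u) (\<lambda>x. - \<sigma>T x) (\<lambda>t a s. - g t a s) (\<lambda>s. - gT s) x s u p
      \<le> - J 0 x s"
    by (rule expected_payoff_le[where J = "\<lambda>t y r. - J t y r"])
      (use assms in \<open>simp_all add: ip_stage_vec_uminus\<close>)
  then show ?thesis
    by (simp add: expected_payoff_uminus)
qed

section \<open>The stage games\<close>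

definition convex_bounded_below :: "('a::real_vector \<Rightarrow> 'f \<Rightarrow> real) \<Rightarrow> bool" where
  "convex_bounded_below W \<longleftrightarrow> (\<forall>i. convex_on UNIV (\<lambda>x. W x i)) \<and> (\<exists>L. \<forall>x i. L \<le> W x i)"

locale anc_game =
  fixes T :: nat
    and A :: "nat \<Rightarrow> real^'n::finite^'n"
    and B :: "nat \<Rightarrow> real^'m::finite^'n"
    and P :: "nat \<Rightarrow> 'act::finite \<Rightarrow> 'f::finite \<Rightarrow> 'f \<Rightarrow> real"
    and q :: "nat \<Rightarrow> 'f \<Rightarrow> real"
    and \<sigma> :: "nat \<Rightarrow> real^'n \<Rightarrow> real^'m \<Rightarrow> real"
    and \<sigma>T :: "real^'n \<Rightarrow> real"
    and g :: "nat \<Rightarrow> 'act \<Rightarrow> 'f \<Rightarrow> real"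
    and gT :: "'f \<Rightarrow> real"
  assumes P_nonneg: "\<And>t a j i. 0 \<le> P t a j i"
    and P_stoch: "\<And>t a j. (\<Sum>i\<in>UNIV. P t a j i) = 1"
    and q_range: "\<And>t i. 0 \<le> q t i \<and> q t i \<le> 1"
    and \<sigma>_nonneg: "\<And>t x u. t < T \<Longrightarrow> 0 \<le> \<sigma> t x u"
    and \<sigma>T_nonneg: "\<And>x. 0 \<le> \<sigma>T x"
    and \<sigma>_coercive: "\<And>t. t < T \<Longrightarrow>
          \<exists>\<alpha> \<beta>. filterlim \<alpha> at_top at_top \<and> (\<forall>x u. \<alpha> (norm u) + \<beta> (norm x) \<le> \<sigma> t x u)"
    and \<sigma>_convex: "\<And>t. t < T \<Longrightarrow> convex_on UNIV (\<lambda>(x, u). \<sigma> t x u)"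
    and \<sigma>T_convex: "convex_on UNIV \<sigma>T"
    and \<sigma>_continuous_control: "\<And>t x. t < T \<Longrightarrow> continuous_on UNIV (\<sigma> t x)"
begin

abbreviation stage where "stage \<equiv> stage_vec A B P q \<sigma> g"

abbreviation V where "V \<equiv> Vfun T A B P q \<sigma> \<sigma>T g gT"

definition stage_value :: "nat \<Rightarrow> (real^'n \<Rightarrow> 'f \<Rightarrow> real) \<Rightarrow> real^'n \<Rightarrow> 'f \<Rightarrow> real" where
  "stage_value t W x s = real_of_ereal (INF u. SUP p\<in>prob_simplex. ereal (ip p (stage t W x s u)))"

lemma V_eq_stage_value:
  assumes "t < T"
  shows "V t = stage_value t (V (Suc t))"
proof -
  have "T - t = Suc (T - Suc t)" using assms by simp
  then show ?thesis
    using assms by (intro ext) (simp add: Vfun_def stage_value_def)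
qed

lemma V_terminal: "V T x s = \<sigma>T x - gT s"
  by (simp add: Vfun_def)

context
  fixes t :: nat and W :: "real^'n \<Rightarrow> 'f \<Rightarrow> real"
  assumes t: "t < T" and W: "convex_bounded_below W"
begin

lemma stage_convex: "convex_on UNIV (\<lambda>(x, u). stage t W x s u a)"
proof -
  have lin: "linear (\<lambda>z. A t *v fst z + B t *v snd z)" "linear (\<lambda>z. A t *v fst z)"
    by (intro linear_compose_add linear_compose[unfolded o_def, OF linear_fst matrix_vector_mul_linear]
        linear_compose[unfolded o_def, OF linear_snd matrix_vector_mul_linear])+
  have W_convex: "convex_on UNIV (\<lambda>x. W x i)" for i
    using W by (simp add: convex_bounded_below_def)
  have "convex_on UNIV (\<lambda>z. \<sigma> t (fst z) (snd z) - g t a s + (\<Sum>i\<in>UNIV. P t a s i *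
      (q t i * W (A t *v fst z + B t *v snd z) i + (1 - q t i) * W (A t *v fst z) i)))"
    using \<sigma>_convex[OF t, unfolded case_prod_unfold] P_nonneg q_range
    by (intro convex_on_add convex_on_diff convex_on_sum_fun convex_on_cmul
        convex_on_compose_linear[OF lin(1) W_convex] convex_on_compose_linear[OF lin(2) W_convex])
      (auto simp: case_prod_beta concave_on_const)
  then show ?thesis
    by (simp add: stage_vec_def case_prod_unfold)
qed

lemma W_continuous: "continuous_on UNIV (\<lambda>x. W x i)"
  using W by (intro convex_on_continuous) (auto simp: convex_bounded_below_def)

lemma stage_continuous_control: "continuous_on UNIV (\<lambda>u. stage t W x s u a)"
proof -
  have "continuous_on UNIV (\<lambda>u. W (A t *v x + B t *v u) i)" for i
    by (rule continuous_on_compose2[OF W_continuous]) (auto intro!: continuous_intros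
        bounded_linear.continuous_on[OF matrix_vector_mul_bounded_linear])
  then show ?thesis
    unfolding stage_vec_def by (intro continuous_intros \<sigma>_continuous_control[OF t])
qed

lemma stage_worst_case_lower_bound: "\<exists>K. \<forall>x s u. \<sigma> t x u + K \<le> Max (range (stage t W x s u))"
proof -
  obtain L where L: "\<And>x i. L \<le> W x i"
    using W by (auto simp: convex_bounded_below_def)
  define G where "G = Max (range (\<lambda>(a, s). g t a s))"
  have G_ge: "g t a s \<le> G" for a s
    unfolding G_def by (rule Max_ge) auto
  have sum_ge: "L \<le> (\<Sum>i\<in>UNIV. P t a s i * (q t i * W (A t *v x + B t *v u) i + (1 - q t i) * W (A t *v x) i))"
    for x s u a
  proof -
    have "L \<le> q t i * W (A t *v x + B t *v u) i + (1 - q t i) * W (A t *v x) i" for i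
    proof -
      have "q t i * L + (1 - q t i) * L \<le> q t i * W (A t *v x + B t *v u) i + (1 - q t i) * W (A t *v x) i"
        using q_range[of t i] by (intro add_mono mult_left_mono L) auto
      then show ?thesis by (simp add: algebra_simps)
    qed
    then have "(\<Sum>i\<in>UNIV. P t a s i * L) \<le> (\<Sum>i\<in>UNIV. P t a s i *
        (q t i * W (A t *v x + B t *v u) i + (1 - q t i) * W (A t *v x) i))"
      by (intro sum_mono mult_left_mono P_nonneg)
    then show ?thesis
      by (simp add: P_stoch flip: sum_distrib_right)
  qed
  have "\<sigma> t x u + (L - G) \<le> stage t W x s u a" for x s u a
    using G_ge[of a s] sum_ge[of a s x u] unfolding stage_vec_def by linarith
  also have "stage t W x s u a \<le> Max (range (stage t W x s u))" for x s u a
    by (rule Max_ge) auto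
  finally show ?thesis by blast
qed

lemma stage_worst_case_coercive: "\<exists>R. \<forall>u. R < norm u \<longrightarrow> M < Max (range (stage t W x s u))"
proof -
  obtain K where K: "\<And>x s u. \<sigma> t x u + K \<le> Max (range (stage t W x s u))"
    using stage_worst_case_lower_bound by blast
  obtain \<alpha> \<beta> where \<alpha>: "filterlim \<alpha> at_top at_top" and \<sigma>_ge: "\<And>x u. \<alpha> (norm u) + \<beta> (norm x) \<le> \<sigma> t x u"
    using \<sigma>_coercive[OF t] by blast
  obtain R where R: "\<And>y. R \<le> y \<Longrightarrow> M - \<beta> (norm x) - K + 1 \<le> \<alpha> y"
    using \<alpha> unfolding filterlim_at_top eventually_at_top_linorder by blast
  have "M < Max (range (stage t W x s u))" if "R < norm u" for u
    using R[of "norm u"] \<sigma>_ge[of u x] K[of x u s] that by simp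
  then show ?thesis by blast
qed

lemma stage_worst_case_minimizer:
  "\<exists>u0. \<forall>u. Max (range (stage t W x s u0)) \<le> Max (range (stage t W x s u))"
  by (intro coercive_continuous_attains_inf continuous_on_Max_image stage_continuous_control
      stage_worst_case_coercive) auto

lemma stage_value_eq_Max:
  assumes "\<And>u. Max (range (stage t W x s u0)) \<le> Max (range (stage t W x s u))"
  shows "stage_value t W x s = Max (range (stage t W x s u0))"
  unfolding stage_value_def INF_SUP_prob_simplex_attained[where F = "stage t W x s", OF assms] by simp

lemma stage_saddle: "\<exists>u0 p0. saddle prob_simplex (\<lambda>u p. ip p (stage t W x s u)) u0 p0 (stage_value t W x s)"
proof -
  obtain u0 where u0: "\<And>u. Max (range (stage t W x s u0)) \<le> Max (range (stage t W x s u))"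
    using stage_worst_case_minimizer by blast
  have "\<exists>p0\<in>prob_simplex. \<forall>u. Max (range (stage t W x s u0)) \<le> ip p0 (stage t W x s u)"
    by (intro ex_prob_simplex_ip_ge convex_on_slice[OF stage_convex] u0)
  then obtain p0 where "p0 \<in> prob_simplex" "\<And>u. Max (range (stage t W x s u0)) \<le> ip p0 (stage t W x s u)"
    by blast
  then have "saddle prob_simplex (\<lambda>u p. ip p (stage t W x s u)) u0 p0 (stage_value t W x s)"
    unfolding saddle_def stage_value_eq_Max[OF u0] by (simp add: ip_le_Max)
  then show ?thesis by blast
qed

lemma convex_bounded_below_stage_value: "convex_bounded_below (stage_value t W)"
proof -
  have "\<exists>h. \<forall>x s u. Max (range (stage t W x s (h x s))) \<le> Max (range (stage t W x s u))"
    using stage_worst_case_minimizer by (intro choice allI) blast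
  then obtain h where h: "\<And>x s u. Max (range (stage t W x s (h x s))) \<le> Max (range (stage t W x s u))"
    by blast
  have convex: "convex_on UNIV (\<lambda>x. Max (range (stage t W x s (h x s))))" for s
  proof (rule convex_on_partial_min[where G = "\<lambda>x u. Max (range (stage t W x s u))"])
    show "convex_on UNIV (\<lambda>(x, u). Max (range (stage t W x s u)))"
      using convex_on_Max_range[where f = "\<lambda>z. stage t W (fst z) s (snd z)"]
        stage_convex[unfolded case_prod_unfold]
      by (simp add: case_prod_unfold)
  qed (rule h)
  obtain K where K: "\<And>x s u. \<sigma> t x u + K \<le> Max (range (stage t W x s u))"
    using stage_worst_case_lower_bound by blast
  have "K \<le> Max (range (stage t W x s u))" for x s u
    using K[of x u s] \<sigma>_nonneg[OF t, of x u] by linarith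
  with convex show ?thesis
    unfolding convex_bounded_below_def stage_value_eq_Max[OF h] by blast
qed

end

lemma V_terminal_convex_bounded_below: "convex_bounded_below (V T)"
proof -
  have "convex_on UNIV (\<lambda>x. \<sigma>T x - gT s)" for s
    using \<sigma>T_convex by (intro convex_on_diff) (simp_all add: concave_on_const)
  moreover have "- Max (range gT) \<le> \<sigma>T x - gT s" for x s
  proof -
    have "gT s \<le> Max (range gT)" by (rule Max_ge) auto
    then show ?thesis using \<sigma>T_nonneg[of x] by linarith
  qed
  ultimately show ?thesis
    unfolding convex_bounded_below_def V_terminal by blast
qed

lemma V_convex_bounded_below: "t \<le> T \<Longrightarrow> convex_bounded_below (V t)"
proof (induction t rule: inc_induct)
  case (step t)
  then show ?case
    by (simp add: V_eq_stage_value convex_bounded_below_stage_value)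
qed (rule V_terminal_convex_bounded_below)

lemma V_saddle:
  assumes "t < T"
  shows "\<exists>u0 p0. saddle prob_simplex (\<lambda>u p. ip p (stage t (V (Suc t)) x s u)) u0 p0 (V t x s)"
  using stage_saddle[OF assms V_convex_bounded_below] assms by (simp add: V_eq_stage_value[OF assms])

lemma V_minimax:
  assumes "t < T"
  shows "(INF u. SUP p\<in>prob_simplex. ereal (ip p (stage t (V (Suc t)) x s u))) = ereal (V t x s)
    \<and> (SUP p\<in>prob_simplex. INF u. ereal (ip p (stage t (V (Suc t)) x s u))) = ereal (V t x s)"
proof -
  obtain u0 p0 where "saddle prob_simplex (\<lambda>u p. ip p (stage t (V (Suc t)) x s u)) u0 p0 (V t x s)"
    using V_saddle[OF assms] by blast
  from saddle_value(1,2)[OF this] show ?thesis by simp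
qed

lemma V_convex_continuous:
  assumes "t \<le> T"
  shows "convex_on UNIV (\<lambda>x. V t x s) \<and> continuous_on UNIV (\<lambda>x. V t x s)"
  using V_convex_bounded_below[OF assms]
  by (auto simp: convex_bounded_below_def intro: convex_on_continuous)

definition optimal_strategies ::
  "(nat \<Rightarrow> real^'n \<Rightarrow> 'f \<Rightarrow> real^'m) \<Rightarrow> (nat \<Rightarrow> real^'n \<Rightarrow> 'f \<Rightarrow> 'act \<Rightarrow> real) \<Rightarrow> bool" where
  "optimal_strategies us ps \<longleftrightarrow> (\<forall>t<T. \<forall>x s.
     (\<forall>u. (SUP p\<in>prob_simplex. ereal (ip p (stage t (V (Suc t)) x s (us t x s))))
           \<le> (SUP p\<in>prob_simplex. ereal (ip p (stage t (V (Suc t)) x s u))))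
     \<and> ps t x s \<in> prob_simplex
     \<and> (\<forall>p\<in>prob_simplex. (INF u. ereal (ip p (stage t (V (Suc t)) x s u)))
           \<le> (INF u. ereal (ip (ps t x s) (stage t (V (Suc t)) x s u)))))"

lemma optimal_strategies_exist: "\<exists>us ps. optimal_strategies us ps"
proof -
  let ?f = "\<lambda>t x s u p. ip p (stage t (V (Suc t)) x s u)"
  let ?min = "\<lambda>t x s u0. \<forall>u. (SUP p\<in>prob_simplex. ereal (?f t x s u0 p))
                                \<le> (SUP p\<in>prob_simplex. ereal (?f t x s u p))"
  let ?max = "\<lambda>t x s p0. p0 \<in> prob_simplex \<and> (\<forall>p\<in>prob_simplex.
                              (INF u. ereal (?f t x s u p)) \<le> (INF u. ereal (?f t x s u p0)))"
  have ex_min: "\<exists>u0. ?min t x s u0" and ex_max: "\<exists>p0. ?max t x s p0" if t: "t < T" for t x s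
  proof -
    obtain u0 p0 where saddle: "saddle prob_simplex (?f t x s) u0 p0 (V t x s)"
      using V_saddle[OF t] by blast
    show "\<exists>u0. ?min t x s u0"
      using saddle_optimal(1)[OF saddle] by blast
    show "\<exists>p0. ?max t x s p0"
      using saddle_optimal(2)[OF saddle] saddle by (auto simp: saddle_def)
  qed
  have "?min t x s (SOME u0. ?min t x s u0)" "?max t x s (SOME p0. ?max t x s p0)"
    if "t < T" for t x s
    using someI_ex[OF ex_min[OF that]] someI_ex[OF ex_max[OF that]] by simp_all
  then have "optimal_strategies (\<lambda>t x s. SOME u0. ?min t x s u0) (\<lambda>t x s. SOME p0. ?max t x s p0)"
    unfolding optimal_strategies_def by simp
  then show ?thesis by blast
qed

lemma optimal_strategies_saddle:
  assumes "optimal_strategies us ps" "t < T"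
  shows "saddle prob_simplex (\<lambda>u p. ip p (stage t (V (Suc t)) x s u)) (us t x s) (ps t x s) (V t x s)"
proof -
  obtain u0 p0 where "saddle prob_simplex (\<lambda>u p. ip p (stage t (V (Suc t)) x s u)) u0 p0 (V t x s)"
    using V_saddle[OF assms(2)] by blast
  then show ?thesis
    by (rule saddle_of_optimal)
      (use assms(1)[unfolded optimal_strategies_def, rule_format, OF assms(2), of x s] in auto)
qed

lemma saddle_point_of_optimal_strategies:
  assumes opt: "optimal_strategies us ps"
  shows "saddle_point T A B P q \<sigma> \<sigma>T g gT x0 s0 us (\<lambda>t x s u. ps t x s)"
proof -
  let ?E = "\<lambda>u p. expected_payoff T A B P q \<sigma> \<sigma>T g gT x0 s0 u p"
  have ps: "(\<lambda>t x s u. ps t x s) \<in> jammer_strats T"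
    using opt by (auto simp: optimal_strategies_def jammer_strats_def)
  have "saddle (jammer_strats T) ?E us (\<lambda>t x s u. ps t x s) (V 0 x0 s0)"
    unfolding saddle_def
  proof (intro conjI ballI allI ps)
    fix p :: "nat \<Rightarrow> real^'n \<Rightarrow> 'f \<Rightarrow> real^'m \<Rightarrow> 'act \<Rightarrow> real"
    assume "p \<in> jammer_strats T"
    then show "?E us p \<le> V 0 x0 s0"
      using optimal_strategies_saddle[OF opt]
      by (intro expected_payoff_le P_nonneg P_stoch q_range V_terminal)
        (auto simp: saddle_def jammer_strats_def)
  next
    fix u
    show "V 0 x0 s0 \<le> ?E u (\<lambda>t x s u. ps t x s)"
      using optimal_strategies_saddle[OF opt]
      by (intro expected_payoff_ge P_nonneg P_stoch q_range V_terminal ps)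
        (auto simp: saddle_def)
  qed
  then show ?thesis
    unfolding saddle_point_def using ps saddle_value[of "jammer_strats T" ?E] by simp
qed

end

theorem theorem4:
  fixes T :: nat
    and A :: "nat \<Rightarrow> real^'n::finite^'n"
    and B :: "nat \<Rightarrow> real^'m::finite^'n"
    and P :: "nat \<Rightarrow> 'act::finite \<Rightarrow> 'f::finite \<Rightarrow> 'f \<Rightarrow> real"
    and q :: "nat \<Rightarrow> 'f \<Rightarrow> real"
    and \<sigma> :: "nat \<Rightarrow> real^'n \<Rightarrow> real^'m \<Rightarrow> real"
    and \<sigma>T :: "real^'n \<Rightarrow> real"
    and g :: "nat \<Rightarrow> 'act \<Rightarrow> 'f \<Rightarrow> real"
    and gT :: "'f \<Rightarrow> real"
  assumes P_nonneg: "\<And>t a j i. 0 \<le> P t a j i"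
    and P_stoch: "\<And>t a j. (\<Sum>i\<in>UNIV. P t a j i) = 1"
    and q_range: "\<And>t i. 0 \<le> q t i \<and> q t i \<le> 1"
    and \<sigma>_nonneg: "\<And>t x u. t < T \<Longrightarrow> 0 \<le> \<sigma> t x u"
    and \<sigma>T_nonneg: "\<And>x. 0 \<le> \<sigma>T x"
    and H1: "\<And>t. t < T \<Longrightarrow> \<exists>(e::real) (d::real) (\<alpha>::real \<Rightarrow> real) (\<beta>::real \<Rightarrow> real).
               filterlim \<alpha> at_top at_top \<and> filterlim \<beta> at_top at_top \<and>
               (\<forall>y\<ge>0. \<alpha> y \<ge> e) \<and> (\<forall>y\<ge>0. \<beta> y \<ge> d) \<and>
               (\<forall>x u. \<sigma> t x u \<ge> \<alpha> (norm u) + \<beta> (norm x))"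
    and H2: "\<And>t. t < T \<Longrightarrow> convex_on UNIV (\<lambda>(x, u). \<sigma> t x u)"
    and H3: "convex_on UNIV \<sigma>T"
    and H3': "\<exists>(d::real) (\<beta>::real \<Rightarrow> real).
               filterlim \<beta> at_top at_top \<and> (\<forall>y\<ge>0. \<beta> y \<ge> 0) \<and>
               (\<forall>y\<ge>0. \<beta> y \<ge> d) \<and> (\<forall>x. \<sigma>T x \<ge> \<beta> (norm x))"
    and H4: "continuous_on UNIV \<sigma>T"
    and H4x: "\<And>t x \<epsilon>. t < T \<Longrightarrow> \<epsilon> > 0 \<Longrightarrow>
               \<exists>\<delta>>0. \<forall>x' u. dist x' x < \<delta> \<longrightarrow> \<bar>\<sigma> t x' u - \<sigma> t x u\<bar> < \<epsilon>"
    and H4u: "\<And>t x. t < T \<Longrightarrow> continuous_on UNIV (\<sigma> t x)"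
  shows
    "(\<forall>t<T. \<forall>x s.
        let \<V> = (\<lambda>u. stage_vec A B P q \<sigma> g t (Vfun T A B P q \<sigma> \<sigma>T g gT (Suc t)) x s u)
        in (INF u\<in>UNIV. SUP p\<in>prob_simplex. ereal (ip p (\<V> u)))
             = (SUP p\<in>prob_simplex. INF u\<in>UNIV. ereal (ip p (\<V> u)))
         \<and> (INF u\<in>UNIV. SUP p\<in>prob_simplex. ereal (ip p (\<V> u))) \<noteq> \<infinity>
         \<and> (INF u\<in>UNIV. SUP p\<in>prob_simplex. ereal (ip p (\<V> u))) \<noteq> -\<infinity>)
     \<and> (\<forall>t<T. \<forall>s. convex_on UNIV (\<lambda>x. Vfun T A B P q \<sigma> \<sigma>T g gT t x s)
                 \<and> continuous_on UNIV (\<lambda>x. Vfun T A B P q \<sigma> \<sigma>T g gT t x s))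
     \<and> (let \<V> = (\<lambda>t x s u. stage_vec A B P q \<sigma> g t (Vfun T A B P q \<sigma> \<sigma>T g gT (Suc t)) x s u);
            argopt = (\<lambda>us ps. \<forall>t<T. \<forall>x s.
               (\<forall>u. (SUP p\<in>prob_simplex. ereal (ip p (\<V> t x s (us t x s))))
                     \<le> (SUP p\<in>prob_simplex. ereal (ip p (\<V> t x s u))))
             \<and> ps t x s \<in> prob_simplex
             \<and> (\<forall>p\<in>prob_simplex. (INF u\<in>UNIV. ereal (ip p (\<V> t x s u)))
                     \<le> (INF u\<in>UNIV. ereal (ip (ps t x s) (\<V> t x s u)))))
        in (\<exists>us ps. argopt us ps)
         \<and> (\<forall>us ps. argopt us ps \<longrightarrow>
              (\<forall>x0 s0. saddle_point T A B P q \<sigma> \<sigma>T g gT x0 s0 us (\<lambda>t x s u. ps t x s))))"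
proof -
  interpret anc_game T A B P q \<sigma> \<sigma>T g gT
  proof unfold_locales
    show "\<exists>\<alpha> \<beta>. filterlim \<alpha> at_top at_top \<and> (\<forall>x u. \<alpha> (norm u) + \<beta> (norm x) \<le> \<sigma> t x u)"
      if "t < T" for t
      using H1[OF that] by blast
  qed (fact P_nonneg P_stoch q_range \<sigma>_nonneg \<sigma>T_nonneg H2 H3 H4u)+
  show ?thesis
    unfolding Let_def optimal_strategies_def[symmetric]
    using V_minimax V_convex_continuous optimal_strategies_exist saddle_point_of_optimal_strategies
    by simp
qed

end
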